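(* Let $d=\infty$ and $C>0$. (1) For product weights ${\boldsymbol\gamma}$: ${\boldsymbol\gamma}\in\mathcal S_{d,C}$ iff $\sum_{j\in\mathbb N}\gamma_j<\infty$. (2) For POD weights ${\boldsymbol\gamma}$ with parameters $a,p$: if $p>a$ and $\Gamma_1>0$, then ${\boldsymbol\gamma}\in\mathcal S_{d,C}$ iff $\sum_{j\in\mathbb N}\gamma_j<\infty$; and if $p=a\ge1$, then $\sum_{j\in\mathbb N}(C^2\gamma_j)^{1/p}<1$ implies ${\boldsymbol\gamma}\in\mathcal S_{d,C}$. (3) For finite-order weights ${\boldsymbol\gamma}$ (of some order $\omega\in\mathbb N$): ${\boldsymbol\gamma}\in\mathcal S_{d,C}$ iff $\sum_{u\in\mathcal U_d}\gamma_u<\infty$.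
   Context: $\mathcal U_\infty$ denotes the set of finite subsets of $\mathbb N$; weights are families ${\boldsymbol\gamma}=(\gamma_u)_{u\in\mathcal U_\infty}$ of non-negative reals. For $C>0$, $\mathcal S_{\infty,C}=\{{\boldsymbol\gamma}:\sum_{v\in\mathcal U_\infty}C^{2|v|}\gamma_v<\infty\}$. Product weights: $\gamma_u=\prod_{j\in u}\gamma_j$ (with $\gamma_\emptyset=1$) for a non-increasing sequence $(\gamma_j)_{j\in\mathbb N}$ of non-negative reals. POD weights: $\gamma_u=\Gamma_{|u|}\prod_{j\in u}\gamma_j$ with $(\gamma_j)$ as before and non-negative $(\Gamma_k)_{k\ge0}$ satisfying $\Gamma_k\le C_a(k!)^a$ for all $k$ and some constants $a,C_a>0$; $p=\mathrm{decay}((\gamma_j)_{j\in\mathbb N})$, where $\mathrm{decay}((a_v)_{v\in V})=\sup\{\tau>0:\sum_v a_v^{1/\tau}<\infty\}$ ($\sup\emptyset=0$). Finite-order weights of order $\omega\in\mathbb N$: $\gamma_u=0$ whenever $|u|>\omega$. *)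

theory Defs
  imports "HOL-Analysis.Analysis"
begin

text \<open>Weights are families indexed by finite subsets of nat (the set U_infinity);
  only their values on finite sets matter.\<close>

definition U_inf :: "nat set set" where
  "U_inf = {u. finite u}"

text \<open>S_{infinity,C}: sum over v in U_infinity of C^(2|v|) gamma_v is finite
  (terms are non-negative, so summability = finiteness of the sum).\<close>
definition in_S_inf :: "real \<Rightarrow> (nat set \<Rightarrow> real) \<Rightarrow> bool" where
  "in_S_inf C \<gamma> \<longleftrightarrow> (\<lambda>v. C ^ (2 * card v) * \<gamma> v) summable_on U_inf"

definition decay :: "(nat \<Rightarrow> real) \<Rightarrow> ereal" where
  "decay a = (let S = {\<tau>::real. \<tau> > 0 \<and> summable (\<lambda>j. a j powr (1 / \<tau>))}
              in if S = {} then 0 else Sup (ereal ` S))"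

definition is_product_weights :: "(nat set \<Rightarrow> real) \<Rightarrow> (nat \<Rightarrow> real) \<Rightarrow> bool" where
  "is_product_weights \<gamma> g \<longleftrightarrow>
     (\<forall>j. 0 \<le> g j) \<and> decseq g \<and> (\<forall>u\<in>U_inf. \<gamma> u = (\<Prod>j\<in>u. g j))"

definition is_POD_weights ::
  "(nat set \<Rightarrow> real) \<Rightarrow> (nat \<Rightarrow> real) \<Rightarrow> (nat \<Rightarrow> real) \<Rightarrow> real \<Rightarrow> real \<Rightarrow> bool" where
  "is_POD_weights \<gamma> \<Gamma> g a Ca \<longleftrightarrow>
     (\<forall>j. 0 \<le> g j) \<and> decseq g \<and> a > 0 \<and> Ca > 0 \<and>
     (\<forall>k. 0 \<le> \<Gamma> k \<and> \<Gamma> k \<le> Ca * (fact k) powr a) \<and>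
     (\<forall>u\<in>U_inf. \<gamma> u = \<Gamma> (card u) * (\<Prod>j\<in>u. g j))"

definition is_finite_order_weights :: "(nat set \<Rightarrow> real) \<Rightarrow> nat \<Rightarrow> bool" where
  "is_finite_order_weights \<gamma> \<omega> \<longleftrightarrow>
     (\<forall>u\<in>U_inf. 0 \<le> \<gamma> u) \<and> (\<forall>u\<in>U_inf. card u > \<omega> \<longrightarrow> \<gamma> u = 0)"

end

theory Submission
  imports Defs
begin

text \<open>With \<open>c j = C\<^sup>2 * g j\<close>, the sum defining \<open>S\<^sub>\<infinity>\<^sub>,\<^sub>C\<close> for POD weights is
  \<open>\<Sum>u. \<Gamma> |u| * \<Prod>j\<in>u. c j\<close>; grouping the sets by cardinality turns it into
  \<open>\<Sum>k. \<Gamma> k * e\<^sub>k(c)\<close> with \<open>e\<^sub>k\<close> the elementary symmetric functions. For \<open>b \<ge> 1\<close> and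
  \<open>S = \<Sum>j. c j powr (1/b)\<close>, superadditivity of \<open>t \<mapsto> t powr b\<close> and Maclaurin's bound give
  \<open>e\<^sub>k(c) \<le> e\<^sub>k(c powr (1/b)) powr b \<le> (S^k / k!) powr b\<close>, so with \<open>\<Gamma> k \<le> C\<^sub>a (k!)^a\<close>
  the sum is dominated by \<open>C\<^sub>a \<Sum>k. (S powr b)^k (k!) powr (a - b)\<close>. This converges when
  \<open>a < b\<close> (ratio test) and when \<open>a = b\<close>, \<open>S < 1\<close> (geometric series); product weights are
  the case \<open>\<Gamma> = 1\<close>, \<open>a = 0\<close>, \<open>b = 1\<close>. Conversely, the singletons alone contribute
  \<open>\<Gamma> 1 * \<Sum>j. c j\<close>. For finite-order weights the factor \<open>C^(2|u|)\<close> lies between two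
  positive constants on the support.\<close>

lemma power_Suc_add_ge:
  fixes p y :: real
  assumes "0 \<le> p" "0 \<le> y"
  shows "p ^ Suc m + real (Suc m) * y * p ^ m \<le> (p + y) ^ Suc m"
proof (induction m)
  case (Suc m)
  have "p ^ Suc (Suc m) + real (Suc (Suc m)) * y * p ^ Suc m
      \<le> (p + y) * (p ^ Suc m + real (Suc m) * y * p ^ m)"
    using assms by (simp add: algebra_simps)
  also have "\<dots> \<le> (p + y) * (p + y) ^ Suc m"
    using Suc assms by (intro mult_left_mono) auto
  finally show ?case by simp
qed simp

lemma power_powr:
  fixes x b :: real
  shows "(x ^ n) powr b = (x powr b) ^ n"
  using prod_powr_distrib[of "\<lambda>_. x" "{..<n}" b] by simp

lemma sum_powr_le_powr_sum:
  fixes z :: "'a \<Rightarrow> real"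
  assumes "\<And>i. 0 \<le> z i" "1 \<le> b"
  shows "(\<Sum>i\<in>F. z i powr b) \<le> (\<Sum>i\<in>F. z i) powr b"
proof (cases "finite F")
  case True
  let ?Z = "\<Sum>i\<in>F. z i"
  have "z i powr b \<le> z i * ?Z powr (b - 1)" if "i \<in> F" for i
  proof -
    have "z i \<le> ?Z"
      using assms True that by (intro member_le_sum) auto
    have "z i powr b = z i * z i powr (b - 1)"
      using powr_add[of "z i" 1 "b - 1"] assms by simp
    also have "\<dots> \<le> z i * ?Z powr (b - 1)"
      using assms \<open>z i \<le> ?Z\<close> by (simp add: mult_left_mono powr_mono2)
    finally show ?thesis .
  qed
  then have "(\<Sum>i\<in>F. z i powr b) \<le> (\<Sum>i\<in>F. z i * ?Z powr (b - 1))"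
    by (rule sum_mono)
  also have "\<dots> = ?Z * ?Z powr (b - 1)"
    by (simp add: sum_distrib_right)
  also have "\<dots> = ?Z powr b"
    using powr_add[of ?Z 1 "b - 1"] assms by (simp add: sum_nonneg)
  finally show ?thesis .
qed simp

definition esym :: "('a \<Rightarrow> 'b::comm_semiring_1) \<Rightarrow> 'a set \<Rightarrow> nat \<Rightarrow> 'b" where
  "esym x A k = (\<Sum>u\<in>{u. u \<subseteq> A \<and> card u = k}. \<Prod>j\<in>u. x j)"

lemma esym_0 [simp]:
  assumes "finite A"
  shows "esym x A 0 = 1"
proof -
  have "{u. u \<subseteq> A \<and> card u = 0} = {{}}"
    using assms by (auto dest: finite_subset)
  then show ?thesis
    by (simp add: esym_def)
qed

lemma esym_empty_Suc [simp]: "esym x {} (Suc m) = 0"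
proof -
  have "{u. u \<subseteq> {} \<and> card u = Suc m} = {}"
    by auto
  then show ?thesis
    unfolding esym_def by (metis sum.empty)
qed

lemma subsets_card_Suc_insert:
  assumes "finite A" "a \<notin> A"
  shows "{u. u \<subseteq> insert a A \<and> card u = Suc m} =
     {u. u \<subseteq> A \<and> card u = Suc m} \<union> insert a ` {u. u \<subseteq> A \<and> card u = m}"
    (is "?L = ?R")
proof
  show "?L \<subseteq> ?R"
  proof
    fix u
    assume u: "u \<in> ?L"
    then have "finite u"
      using assms finite_subset by blast
    then show "u \<in> ?R"
      using u by (cases "a \<in> u") (auto intro!: image_eqI[of u "insert a" "u - {a}"])
  qed
  have "card (insert a v) = Suc (card v)" if "v \<subseteq> A" for v
    using that assms by (meson card_insert_disjoint finite_subset subsetD)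
  then show "?R \<subseteq> ?L"
    by auto
qed

lemma esym_insert_Suc:
  assumes "finite A" "a \<notin> A"
  shows "esym x (insert a A) (Suc m) = esym x A (Suc m) + x a * esym x A m"
proof -
  let ?P = "\<lambda>n. {u. u \<subseteq> A \<and> card u = n}"
  have fin: "finite (?P n)" for n
    using assms(1) by auto
  have disj: "?P (Suc m) \<inter> insert a ` ?P m = {}"
    using assms(2) by auto
  have inj: "inj_on (insert a) (?P m)"
    using assms(2) by (intro inj_onI) (metis insert_ident mem_Collect_eq subset_iff)
  have prod_insert: "(\<Prod>j\<in>insert a u. x j) = x a * (\<Prod>j\<in>u. x j)" if "u \<in> ?P m" for u
  proof -
    have "finite u" "a \<notin> u"
      using that assms finite_subset by auto
    then show ?thesis
      by simp
  qed
  show ?thesis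
    unfolding esym_def subsets_card_Suc_insert[OF assms]
    by (simp add: sum.union_disjoint[OF fin _ disj] sum.reindex[OF inj] prod_insert
        sum_distrib_left fin)
qed

lemma esym_le_power_sum_div_fact:
  fixes x :: "'a \<Rightarrow> real"
  assumes "finite A" "\<And>j. 0 \<le> x j"
  shows "esym x A k \<le> (\<Sum>j\<in>A. x j) ^ k / fact k"
  using assms(1)
proof (induction A arbitrary: k rule: finite_induct)
  case empty
  then show ?case
    by (cases k) simp_all
next
  case (insert a A)
  let ?p = "\<Sum>j\<in>A. x j"
  show ?case
  proof (cases k)
    case (Suc m)
    have "esym x (insert a A) k \<le> ?p ^ Suc m / fact (Suc m) + x a * (?p ^ m / fact m)"
      unfolding Suc esym_insert_Suc[OF insert(1,2)]
      using insert(3)[of "Suc m"] insert(3)[of m] assms(2)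
      by (intro add_mono mult_left_mono) auto
    also have "\<dots> = (?p ^ Suc m + real (Suc m) * x a * ?p ^ m) / fact (Suc m)"
      by (simp add: add_divide_distrib)
    also have "\<dots> \<le> (?p + x a) ^ Suc m / fact (Suc m)"
      using assms(2) by (intro divide_right_mono power_Suc_add_ge) (auto intro: sum_nonneg)
    finally show ?thesis
      using insert(1,2) Suc by (simp add: add.commute)
  qed (use insert(1) in simp)
qed

lemma esym_le_esym_powr:
  fixes c :: "'a \<Rightarrow> real"
  assumes "\<And>j. 0 \<le> c j" "1 \<le> b"
  shows "esym c A k \<le> esym (\<lambda>j. c j powr (1 / b)) A k powr b"
proof -
  have c: "c j = (c j powr (1 / b)) powr b" for j
    using assms by (simp add: powr_powr)
  have "esym c A k = (\<Sum>u | u \<subseteq> A \<and> card u = k. (\<Prod>j\<in>u. c j powr (1 / b)) powr b)"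
    unfolding esym_def prod_powr_distrib c[symmetric] ..
  also have "\<dots> \<le> esym (\<lambda>j. c j powr (1 / b)) A k powr b"
    unfolding esym_def using assms by (intro sum_powr_le_powr_sum) (auto intro: prod_nonneg)
  finally show ?thesis .
qed

lemma esym_le_suminf_powr:
  fixes c :: "nat \<Rightarrow> real"
  assumes "finite A" "\<And>j. 0 \<le> c j" "1 \<le> b" "summable (\<lambda>j. c j powr (1 / b))"
  shows "esym c A k \<le> ((\<Sum>j. c j powr (1 / b)) ^ k / fact k) powr b"
proof -
  let ?x = "\<lambda>j. c j powr (1 / b)"
  have "esym c A k \<le> esym ?x A k powr b"
    using assms by (intro esym_le_esym_powr)
  also have "\<dots> \<le> ((\<Sum>j\<in>A. ?x j) ^ k / fact k) powr b"
    using assms by (intro powr_mono2 esym_le_power_sum_div_fact)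
      (auto simp: esym_def intro!: sum_nonneg prod_nonneg)
  also have "\<dots> \<le> ((\<Sum>j. ?x j) ^ k / fact k) powr b"
    using assms by (intro powr_mono2 divide_right_mono power_mono sum_le_suminf)
      (auto intro!: sum_nonneg divide_nonneg_pos zero_le_power)
  finally show ?thesis .
qed

lemma summable_on_U_inf_card_prod:
  fixes c w :: "nat \<Rightarrow> real"
  assumes c: "\<And>j. 0 \<le> c j" and w: "\<And>k. 0 \<le> w k" and b: "1 \<le> b"
    and summable_c: "summable (\<lambda>j. c j powr (1 / b))"
    and summable_w: "summable (\<lambda>k. w k * ((\<Sum>j. c j powr (1 / b)) ^ k / fact k) powr b)"
  shows "(\<lambda>u. w (card u) * (\<Prod>j\<in>u. c j)) summable_on U_inf"
proof (rule nonneg_bdd_above_summable_on)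
  let ?h = "\<lambda>u. w (card u) * (\<Prod>j\<in>u. c j)"
  let ?t = "\<lambda>k. w k * ((\<Sum>j. c j powr (1 / b)) ^ k / fact k) powr b"
  show "0 \<le> ?h u" for u
    using c w by (simp add: prod_nonneg)
  show "bdd_above (sum ?h ` {F. F \<subseteq> U_inf \<and> finite F})"
  proof (rule bdd_aboveI2)
    fix F
    assume "F \<in> {F. F \<subseteq> U_inf \<and> finite F}"
    then have F: "F \<subseteq> Pow (\<Union>F)" and A: "finite (\<Union>F)"
      by (auto simp: U_inf_def)
    have "sum ?h F \<le> sum ?h (Pow (\<Union>F))"
      using c w A F by (intro sum_mono2) (auto simp: prod_nonneg)
    also have "\<dots> = (\<Sum>k\<le>card (\<Union>F). sum ?h {u \<in> Pow (\<Union>F). card u = k})"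
      using A by (intro sum.group[symmetric]) (auto intro: card_mono)
    also have "\<dots> = (\<Sum>k\<le>card (\<Union>F). w k * esym c (\<Union>F) k)"
      unfolding esym_def sum_distrib_left by (intro sum.cong) auto
    also have "\<dots> \<le> (\<Sum>k\<le>card (\<Union>F). ?t k)"
      using A c b summable_c by (intro sum_mono mult_left_mono w esym_le_suminf_powr)
    also have "\<dots> \<le> suminf ?t"
      using summable_w w by (intro sum_le_suminf) auto
    finally show "sum ?h F \<le> suminf ?t" .
  qed
qed

lemma summable_singletons_if_summable_on_U_inf:
  fixes h :: "nat set \<Rightarrow> 'a::banach"
  assumes "h summable_on U_inf"
  shows "summable (\<lambda>j. h {j})"
proof -
  have "h summable_on range (\<lambda>j. {j})"
    using assms by (rule summable_on_subset_banach) (auto simp: U_inf_def)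
  then have "(h \<circ> (\<lambda>j. {j})) summable_on UNIV"
    by (subst summable_on_reindex[symmetric]) (auto intro: inj_onI)
  then show ?thesis
    by (simp add: o_def summable_on_imp_summable)
qed

lemma summable_power_mult_fact_powr_neg:
  fixes X e :: real
  assumes "0 \<le> X" "0 < e"
  shows "summable (\<lambda>k. X ^ k * fact k powr (- e))"
proof -
  have "((\<lambda>n. X * real (Suc n) powr (- e)) \<longlongrightarrow> X * 0) sequentially"
    using assms filterlim_compose[OF filterlim_real_sequentially filterlim_Suc]
    by (intro tendsto_mult tendsto_const tendsto_neg_powr) auto
  then have "eventually (\<lambda>n. X * real (Suc n) powr (- e) < 1 / 2) sequentially"
    by (intro order_tendstoD) auto
  then obtain N where N: "\<And>n. N \<le> n \<Longrightarrow> X * real (Suc n) powr (- e) < 1 / 2"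
    by (auto simp: eventually_sequentially)
  show ?thesis
  proof (rule summable_ratio_test[of "1 / 2" N])
    fix n
    assume "N \<le> n"
    have "X ^ Suc n * fact (Suc n) powr (- e)
        = (X * real (Suc n) powr (- e)) * (X ^ n * fact n powr (- e))"
      by (simp add: powr_mult fact_Suc)
    also have "\<dots> \<le> 1 / 2 * (X ^ n * fact n powr (- e))"
      using N[OF \<open>N \<le> n\<close>] assms by (intro mult_right_mono) auto
    finally show "norm (X ^ Suc n * fact (Suc n) powr (- e))
        \<le> 1 / 2 * norm (X ^ n * fact n powr (- e))"
      using assms by simp
  qed simp
qed

lemma summable_fact_powr_weighted:
  fixes \<Gamma> :: "nat \<Rightarrow> real"
  assumes "\<And>k. 0 \<le> \<Gamma> k" "\<And>k. \<Gamma> k \<le> Ca * fact k powr a" "0 \<le> S"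
    and "summable (\<lambda>k. (S powr b) ^ k * fact k powr (a - b))"
  shows "summable (\<lambda>k. \<Gamma> k * (S ^ k / fact k) powr b)"
proof (rule summable_comparison_test')
  show "summable (\<lambda>k. Ca * ((S powr b) ^ k * fact k powr (a - b)))"
    using assms(4) by (rule summable_mult)
  fix k
  have "norm (\<Gamma> k * (S ^ k / fact k) powr b) = \<Gamma> k * ((S powr b) ^ k / fact k powr b)"
    using assms by (simp add: powr_divide power_powr)
  also have "\<dots> \<le> Ca * fact k powr a * ((S powr b) ^ k / fact k powr b)"
    using assms by (intro mult_right_mono) auto
  also have "\<dots> = Ca * ((S powr b) ^ k * fact k powr (a - b))"
    by (simp add: powr_diff)
  finally show "norm (\<Gamma> k * (S ^ k / fact k) powr b)
      \<le> Ca * ((S powr b) ^ k * fact k powr (a - b))" .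
qed

lemma in_S_inf_iff_summable_on_card_prod:
  assumes "\<And>u. u \<in> U_inf \<Longrightarrow> \<gamma> u = \<Gamma> (card u) * (\<Prod>j\<in>u. g j)"
  shows "in_S_inf C \<gamma> \<longleftrightarrow> (\<lambda>u. \<Gamma> (card u) * (\<Prod>j\<in>u. C\<^sup>2 * g j)) summable_on U_inf"
  unfolding in_S_inf_def
  by (rule summable_on_cong) (simp add: assms prod.distrib power_mult)

lemma summable_if_in_S_inf:
  assumes "in_S_inf C \<gamma>" "C \<noteq> 0" "\<Gamma> 1 \<noteq> 0"
    and "\<And>u. u \<in> U_inf \<Longrightarrow> \<gamma> u = \<Gamma> (card u) * (\<Prod>j\<in>u. g j)"
  shows "summable g"
proof -
  have "(\<lambda>u. \<Gamma> (card u) * (\<Prod>j\<in>u. C\<^sup>2 * g j)) summable_on U_inf"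
    using assms(1) in_S_inf_iff_summable_on_card_prod[OF assms(4)] by blast
  from summable_singletons_if_summable_on_U_inf[OF this]
  have "summable (\<lambda>j. (\<Gamma> 1 * C\<^sup>2) * g j)"
    by (simp add: mult.assoc)
  then show ?thesis
    using assms(2,3) by simp
qed

lemma in_S_inf_if_summable_powr:
  assumes \<gamma>: "\<And>u. u \<in> U_inf \<Longrightarrow> \<gamma> u = \<Gamma> (card u) * (\<Prod>j\<in>u. g j)"
    and g: "\<And>j. 0 \<le> g j"
    and \<Gamma>: "\<And>k. 0 \<le> \<Gamma> k" "\<And>k. \<Gamma> k \<le> Ca * fact k powr a"
    and b: "1 \<le> b"
    and summable_g: "summable (\<lambda>j. (C\<^sup>2 * g j) powr (1 / b))"
    and summable_fact:
      "summable (\<lambda>k. ((\<Sum>j. (C\<^sup>2 * g j) powr (1 / b)) powr b) ^ k * fact k powr (a - b))"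
  shows "in_S_inf C \<gamma>"
proof -
  have "summable (\<lambda>k. \<Gamma> k * ((\<Sum>j. (C\<^sup>2 * g j) powr (1 / b)) ^ k / fact k) powr b)"
    using summable_g by (intro summable_fact_powr_weighted[OF \<Gamma> _ summable_fact] suminf_nonneg)
      auto
  then have "(\<lambda>u. \<Gamma> (card u) * (\<Prod>j\<in>u. C\<^sup>2 * g j)) summable_on U_inf"
    using g by (intro summable_on_U_inf_card_prod[OF _ \<Gamma>(1) b summable_g]) auto
  then show ?thesis
    using in_S_inf_iff_summable_on_card_prod[OF \<gamma>] by blast
qed

lemma less_decayE:
  assumes "ereal a < decay g" "0 \<le> a"
  obtains \<tau> where "a < \<tau>" "summable (\<lambda>j. g j powr (1 / \<tau>))"
proof -
  define T where "T = {\<tau>::real. \<tau> > 0 \<and> summable (\<lambda>j. g j powr (1 / \<tau>))}"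
  have "T \<noteq> {}"
    using assms by (auto simp: decay_def T_def[symmetric])
  then have "ereal a < Sup (ereal ` T)"
    using assms by (simp add: decay_def T_def[symmetric])
  then show ?thesis
    using that by (auto simp: less_Sup_iff T_def)
qed

theorem in_S_inf_product_weights_iff:
  assumes "C \<noteq> 0" "is_product_weights \<gamma> g"
  shows "in_S_inf C \<gamma> \<longleftrightarrow> summable g"
proof -
  have g: "\<And>j. 0 \<le> g j" and \<gamma>: "\<And>u. u \<in> U_inf \<Longrightarrow> \<gamma> u = 1 * (\<Prod>j\<in>u. g j)"
    using assms(2) unfolding is_product_weights_def by auto
  show ?thesis
  proof
    show "in_S_inf C \<gamma> \<Longrightarrow> summable g"
      by (rule summable_if_in_S_inf[where \<Gamma> = "\<lambda>_. 1", OF _ assms(1) _ \<gamma>]) simp_all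
  next
    assume "summable g"
    let ?S = "\<Sum>j. (C\<^sup>2 * g j) powr (1 / 1)"
    have "summable (\<lambda>k. (?S powr 1) ^ k * fact k powr (0 - 1))"
      using summable_power_mult_fact_powr_neg[of "?S powr 1" 1] by simp
    then show "in_S_inf C \<gamma>"
      using \<open>summable g\<close> g
      by (intro in_S_inf_if_summable_powr[where \<Gamma> = "\<lambda>_. 1" and Ca = 1 and a = 0 and b = 1, OF \<gamma>])
        simp_all
  qed
qed

theorem in_S_inf_POD_weights_iff:
  assumes "C \<noteq> 0" "is_POD_weights \<gamma> \<Gamma> g a Ca" "ereal a < decay g" "0 < \<Gamma> 1"
  shows "in_S_inf C \<gamma> \<longleftrightarrow> summable g"
proof
  have g: "\<And>j. 0 \<le> g j" and a: "0 < a" and \<Gamma>: "\<And>k. 0 \<le> \<Gamma> k" "\<And>k. \<Gamma> k \<le> Ca * fact k powr a"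
    and \<gamma>: "\<And>u. u \<in> U_inf \<Longrightarrow> \<gamma> u = \<Gamma> (card u) * (\<Prod>j\<in>u. g j)"
    using assms(2) unfolding is_POD_weights_def by auto
  show "in_S_inf C \<gamma> \<Longrightarrow> summable g"
    using assms(4) by (intro summable_if_in_S_inf[OF _ assms(1) _ \<gamma>]) auto
  assume "summable g"
  obtain \<tau> where "a < \<tau>" and summable_\<tau>: "summable (\<lambda>j. g j powr (1 / \<tau>))"
    using assms(3) a by (auto elim: less_decayE)
  \<comment> \<open>The comparison needs \<open>b \<ge> 1\<close>; if \<open>\<tau> \<le> 1\<close>, the hypothesis \<open>summable g\<close> covers \<open>b = 1\<close>.\<close>
  define b where "b = max 1 \<tau>"
  have "summable (\<lambda>j. g j powr (1 / b))"
    using \<open>summable g\<close> summable_\<tau> g by (simp add: b_def max_def)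
  then have "summable (\<lambda>j. (C\<^sup>2) powr (1 / b) * g j powr (1 / b))"
    by (rule summable_mult)
  then have summable_b: "summable (\<lambda>j. (C\<^sup>2 * g j) powr (1 / b))"
    using g by (simp add: powr_mult)
  let ?S = "\<Sum>j. (C\<^sup>2 * g j) powr (1 / b)"
  have "summable (\<lambda>k. (?S powr b) ^ k * fact k powr (- (b - a)))"
    using \<open>a < \<tau>\<close> by (intro summable_power_mult_fact_powr_neg) (auto simp: b_def)
  then show "in_S_inf C \<gamma>"
    by (intro in_S_inf_if_summable_powr[OF \<gamma> g \<Gamma> _ summable_b]) (auto simp: b_def)
qed

theorem in_S_inf_POD_weights_if_suminf_less_1:
  assumes "is_POD_weights \<gamma> \<Gamma> g a Ca" "1 \<le> a"
    and summable_a: "summable (\<lambda>j. (C\<^sup>2 * g j) powr (1 / a))"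
    and less_1: "(\<Sum>j. (C\<^sup>2 * g j) powr (1 / a)) < 1"
  shows "in_S_inf C \<gamma>"
proof -
  have g: "\<And>j. 0 \<le> g j" and \<Gamma>: "\<And>k. 0 \<le> \<Gamma> k" "\<And>k. \<Gamma> k \<le> Ca * fact k powr a"
    and \<gamma>: "\<And>u. u \<in> U_inf \<Longrightarrow> \<gamma> u = \<Gamma> (card u) * (\<Prod>j\<in>u. g j)"
    using assms(1) unfolding is_POD_weights_def by auto
  let ?S = "\<Sum>j. (C\<^sup>2 * g j) powr (1 / a)"
  have "0 \<le> ?S"
    using summable_a by (intro suminf_nonneg) auto
  then have "?S powr a < 1"
    using powr_less_mono2[of a ?S 1] less_1 assms(2) by simp
  then have "summable (\<lambda>k. (?S powr a) ^ k * fact k powr (a - a))"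
    by (simp add: summable_geometric)
  with \<gamma> g \<Gamma> assms(2) summable_a show ?thesis
    by (rule in_S_inf_if_summable_powr)
qed

theorem in_S_inf_finite_order_weights_iff:
  assumes "C \<noteq> 0" "is_finite_order_weights \<gamma> \<omega>"
  shows "in_S_inf C \<gamma> \<longleftrightarrow> \<gamma> summable_on U_inf"
proof -
  have \<gamma>: "\<And>u. u \<in> U_inf \<Longrightarrow> 0 \<le> \<gamma> u"
    and vanish: "\<And>u. u \<in> U_inf \<Longrightarrow> \<omega> < card u \<Longrightarrow> \<gamma> u = 0"
    using assms(2) unfolding is_finite_order_weights_def by auto
  define m M where "m = min 1 (C\<^sup>2) ^ \<omega>" and "M = max 1 (C\<^sup>2) ^ \<omega>"
  have "m \<le> C ^ (2 * card u) \<and> C ^ (2 * card u) \<le> M" if "card u \<le> \<omega>" for u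
  proof -
    have "m \<le> min 1 (C\<^sup>2) ^ card u" "max 1 (C\<^sup>2) ^ card u \<le> M"
      unfolding m_def M_def using assms(1) that by (auto intro: power_decreasing power_increasing)
    moreover have "min 1 (C\<^sup>2) ^ card u \<le> (C\<^sup>2) ^ card u" "(C\<^sup>2) ^ card u \<le> max 1 (C\<^sup>2) ^ card u"
      by (auto intro: power_mono)
    ultimately show ?thesis
      by (simp add: power_mult)
  qed
  then have lower: "m * \<gamma> u \<le> C ^ (2 * card u) * \<gamma> u"
    and upper: "C ^ (2 * card u) * \<gamma> u \<le> M * \<gamma> u" if "u \<in> U_inf" for u
    using that \<gamma> vanish by (cases "card u \<le> \<omega>"; force intro: mult_right_mono)+
  have "0 < m"
    using assms(1) by (simp add: m_def)
  show ?thesis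
    unfolding in_S_inf_def
  proof
    assume "(\<lambda>u. C ^ (2 * card u) * \<gamma> u) summable_on U_inf"
    then have "(\<lambda>u. (1 / m) * (C ^ (2 * card u) * \<gamma> u)) summable_on U_inf"
      by (rule summable_on_cmult_right)
    then show "\<gamma> summable_on U_inf"
      by (rule summable_on_comparison_test) (use lower \<gamma> \<open>0 < m\<close> in \<open>auto simp: field_simps\<close>)
  next
    assume "\<gamma> summable_on U_inf"
    then have "(\<lambda>u. M * \<gamma> u) summable_on U_inf"
      by (rule summable_on_cmult_right)
    then show "(\<lambda>u. C ^ (2 * card u) * \<gamma> u) summable_on U_inf"
      by (rule summable_on_comparison_test) (use upper \<gamma> in \<open>auto simp: zero_le_mult_iff zero_le_even_power\<close>)
  qed
qed

theorem mainTheorem7: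
  fixes C :: real
  assumes "C > 0"
  shows "(\<forall>\<gamma> g. is_product_weights \<gamma> g \<longrightarrow> (in_S_inf C \<gamma> \<longleftrightarrow> summable g))
    \<and> (\<forall>\<gamma> \<Gamma> g a Ca. is_POD_weights \<gamma> \<Gamma> g a Ca \<longrightarrow>
         ((decay g > ereal a \<and> \<Gamma> 1 > 0 \<longrightarrow> (in_S_inf C \<gamma> \<longleftrightarrow> summable g)) \<and>
          (decay g = ereal a \<and> a \<ge> 1 \<and> summable (\<lambda>j. (C\<^sup>2 * g j) powr (1 / a)) \<and>
             (\<Sum>j. (C\<^sup>2 * g j) powr (1 / a)) < 1 \<longrightarrow> in_S_inf C \<gamma>)))
    \<and> (\<forall>\<gamma> \<omega>. \<omega> \<ge> 1 \<and> is_finite_order_weights \<gamma> \<omega> \<longrightarrow>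
         (in_S_inf C \<gamma> \<longleftrightarrow> \<gamma> summable_on U_inf))"
  using assms
  by (auto simp: in_S_inf_product_weights_iff in_S_inf_POD_weights_iff
      in_S_inf_finite_order_weights_iff intro: in_S_inf_POD_weights_if_suminf_less_1)

end
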